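(* There exists an invertible $25\times25$ binary matrix $A'$ such that the linear kernel $g({\bf u})={\bf u}A'$ has partial distance sequence $(1,2,2,2,2,2,4,4,4,4,4,4,4,8,8,8,8,8,8,8,12,12,12,16,16)$. Consequently $E_{25}\ge\frac1{25}\sum_{i=0}^{24}\log_{25}D_{min}^{(i)}\approx0.50608$.
   Context: A kernel of dimension $\ell$ is a bijection $g:\{0,1\}^\ell\to\{0,1\}^\ell$; a linear kernel is $g({\bf u})={\bf u}G$ over $\mathbb{F}_2$ for an invertible $\ell\times\ell$ binary matrix $G$. ${\bf a}\bullet{\bf b}$ denotes concatenation, $d_H$ Hamming distance. Partial distances: $D_{min}^{(i)}=\min\{d_H(g({\bf w}\bullet 0\bullet{\bf u}),g({\bf w}\bullet 1\bullet {\bf v})) : {\bf w}\in\{0,1\}^i,\ {\bf u},{\bf v}\in\{0,1\}^{\ell-i-1}\}$, $i=0,\dots,\ell-1$; exponent $E(g)=\frac1\ell\sum_{i}\log_\ell D_{min}^{(i)}$; $E_\ell=\max_g E(g)$ over all kernels of dimension $\ell$. *)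

theory Defs
  imports Complex_Main
begin

text \<open>Binary vectors of length l are bool lists of length l (True = 1).
  A binary l x l matrix is a function G :: nat => nat => bool, entry G i j
  for i, j < l (row i, column j). Arithmetic is over F_2 (sum = parity).\<close>

definition bvecs :: "nat \<Rightarrow> bool list set" where
  "bvecs l = {xs. length xs = l}"

definition hamming :: "bool list \<Rightarrow> bool list \<Rightarrow> nat" where
  "hamming xs ys = card {k. k < length xs \<and> xs ! k \<noteq> ys ! k}"

definition vec_mat :: "nat \<Rightarrow> bool list \<Rightarrow> (nat \<Rightarrow> nat \<Rightarrow> bool) \<Rightarrow> bool list" where
  "vec_mat l u G = map (\<lambda>j. odd (card {i. i < l \<and> u ! i \<and> G i j})) [0..<l]"

definition mat_mult2 :: "nat \<Rightarrow> (nat \<Rightarrow> nat \<Rightarrow> bool) \<Rightarrow> (nat \<Rightarrow> nat \<Rightarrow> bool) \<Rightarrow> (nat \<Rightarrow> nat \<Rightarrow> bool)" where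
  "mat_mult2 l G H = (\<lambda>i j. odd (card {k. k < l \<and> G i k \<and> H k j}))"

definition invertible2 :: "nat \<Rightarrow> (nat \<Rightarrow> nat \<Rightarrow> bool) \<Rightarrow> bool" where
  "invertible2 l G \<longleftrightarrow> (\<exists>H. \<forall>i<l. \<forall>j<l.
      mat_mult2 l G H i j = (i = j) \<and> mat_mult2 l H G i j = (i = j))"

definition lin_kernel :: "nat \<Rightarrow> (nat \<Rightarrow> nat \<Rightarrow> bool) \<Rightarrow> bool list \<Rightarrow> bool list" where
  "lin_kernel l G = (\<lambda>u. vec_mat l u G)"

definition partial_dist :: "nat \<Rightarrow> (bool list \<Rightarrow> bool list) \<Rightarrow> nat \<Rightarrow> nat" where
  "partial_dist l g i = Min {hamming (g (w @ [False] @ u)) (g (w @ [True] @ v)) | w u v.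
      length w = i \<and> length u = l - i - 1 \<and> length v = l - i - 1}"

definition kernel :: "nat \<Rightarrow> (bool list \<Rightarrow> bool list) \<Rightarrow> bool" where
  "kernel l g \<longleftrightarrow> bij_betw g (bvecs l) (bvecs l)"

definition kernel_exponent :: "nat \<Rightarrow> (bool list \<Rightarrow> bool list) \<Rightarrow> real" where
  "kernel_exponent l g = (1 / real l) * (\<Sum>i<l. log (real l) (real (partial_dist l g i)))"

text \<open>E_l = max of E(g) over all kernels of dimension l (the set of values is finite,
  since E(g) only depends on g restricted to bvecs l).\<close>
definition max_exponent :: "nat \<Rightarrow> real" where
  "max_exponent l = Max {kernel_exponent l g | g. kernel l g}"

definition D25 :: "nat list" where
  "D25 = [1,2,2,2,2,2,4,4,4,4,4,4,4,8,8,8,8,8,8,8,12,12,12,16,16]"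

end

theory Submission
  imports Defs "HOL-Library.FuncSet"
begin

(* A kernel g(u) = u A over F_2 has a partial distance with a classical coding
   interpretation: since g is linear, d_H(g(w0u), g(w1v)) is the weight of
   r_i + (u + v) R_{>i}, where r_i is row i of A and R_{>i} consists of the rows
   below it.  Hence D^(i) is the distance from r_i to the span of the later rows. *)

definition vadd :: "bool list \<Rightarrow> bool list \<Rightarrow> bool list" where
  "vadd a b = map2 (\<noteq>) a b"

definition weight :: "bool list \<Rightarrow> nat" where
  "weight v = length (filter id v)"

fun lincomb :: "nat \<Rightarrow> bool list \<Rightarrow> bool list list \<Rightarrow> bool list" where
  "lincomb n (c # cs) (r # rs) = (if c then vadd r (lincomb n cs rs) else lincomb n cs rs)"
| "lincomb n _ _ = replicate n False"

lemma length_vadd [simp]: "length (vadd a b) = min (length a) (length b)"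
  by (simp add: vadd_def)

lemma nth_vadd [simp]: "j < length a \<Longrightarrow> j < length b \<Longrightarrow> vadd a b ! j = (a ! j \<noteq> b ! j)"
  by (simp add: vadd_def)

lemma vadd_Cons [simp]: "vadd (x # a) (y # b) = (x \<noteq> y) # vadd a b"
  by (simp add: vadd_def)

lemma vadd_assoc:
  "length a = length b \<Longrightarrow> length b = length c \<Longrightarrow> vadd a (vadd b c) = vadd (vadd a b) c"
  by (rule nth_equalityI) auto

lemma vadd_zero_right [simp]: "length a = n \<Longrightarrow> vadd a (replicate n False) = a"
  by (rule nth_equalityI) auto

lemma vadd_zero_left [simp]: "length a = n \<Longrightarrow> vadd (replicate n False) a = a"
  by (rule nth_equalityI) auto

lemma vadd_self [simp]: "vadd a a = replicate (length a) False"
  by (rule nth_equalityI) auto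

lemma vadd_append: "length a = length c \<Longrightarrow> vadd (a @ b) (c @ d) = vadd a c @ vadd b d"
  by (simp add: vadd_def)

lemma weight_Cons [simp]: "weight (x # v) = (if x then Suc (weight v) else weight v)"
  by (simp add: weight_def)

lemma length_lincomb [simp]: "\<forall>r\<in>set rs. length r = n \<Longrightarrow> length (lincomb n t rs) = n"
  by (induction n t rs rule: lincomb.induct) auto

lemma lincomb_vadd:
  assumes "length a = length rs" "length b = length rs" "\<forall>r\<in>set rs. length r = n"
  shows "lincomb n (vadd a b) rs = vadd (lincomb n a rs) (lincomb n b rs)"
  using assms
proof (induction rs arbitrary: a b)
  case (Cons r rs)
  then obtain x a' y b' where ab: "a = x # a'" "b = y # b'"
    by (metis length_Suc_conv)
  with Cons have len: "length a' = length rs" "length b' = length rs" "length r = n"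
    "\<forall>r\<in>set rs. length r = n" by auto
  with Cons.IH have IH: "lincomb n (vadd a' b') rs = vadd (lincomb n a' rs) (lincomb n b' rs)"
    by blast
  show ?case
    by (simp add: ab IH, intro conjI impI; rule nth_equalityI) (use len in auto)
qed simp

lemma lincomb_zero_coeffs [simp]: "lincomb n (replicate k False) rs = replicate n False"
proof (induction k arbitrary: rs)
  case (Suc k)
  then show ?case by (cases rs) auto
qed simp

lemma lincomb_zero_rows:
  "\<forall>r\<in>set rs. r = replicate n False \<Longrightarrow> lincomb n t rs = replicate n False"
  by (induction n t rs rule: lincomb.induct) auto

lemma lincomb_lincomb:
  assumes "length t = length rs" "\<forall>r\<in>set rs. length r = length hs" "\<forall>h\<in>set hs. length h = m"
  shows "lincomb m (lincomb (length hs) t rs) hs = lincomb m t (map (\<lambda>r. lincomb m r hs) rs)"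
  using assms
proof (induction rs arbitrary: t)
  case (Cons r rs)
  then obtain c t' where "t = c # t'" by (metis length_Suc_conv)
  with Cons show ?case by (auto simp: lincomb_vadd)
qed simp

lemma lincomb_unit_prefix:
  "i < length rs \<Longrightarrow>
   lincomb n (replicate i False @ True # t) rs = vadd (rs ! i) (lincomb n t (drop (Suc i) rs))"
proof (induction i arbitrary: rs)
  case 0
  then show ?case by (cases rs) auto
next
  case (Suc i)
  then show ?case by (cases rs) auto
qed

lemma nth_lincomb:
  assumes "length t = length rs" "\<forall>r\<in>set rs. length r = n" "j < n"
  shows "lincomb n t rs ! j = odd (length (filter (\<lambda>(c, r). c \<and> r ! j) (zip t rs)))"
  using assms
proof (induction rs arbitrary: t)
  case (Cons r rs)
  then obtain c t' where "t = c # t'" by (metis length_Suc_conv)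
  with Cons show ?case by auto
qed simp

definition mat_of_rows :: "bool list list \<Rightarrow> nat \<Rightarrow> nat \<Rightarrow> bool" where
  "mat_of_rows R = (\<lambda>i j. R ! i ! j)"

definition square_rows :: "nat \<Rightarrow> bool list list \<Rightarrow> bool" where
  "square_rows l R \<longleftrightarrow> length R = l \<and> (\<forall>r\<in>set R. length r = l)"

definition id_rows :: "nat \<Rightarrow> bool list list" where
  "id_rows n = map (\<lambda>i. map (\<lambda>j. i = j) [0..<n]) [0..<n]"

lemma length_vec_mat [simp]: "length (vec_mat l u G) = l"
  by (simp add: vec_mat_def)

lemma vec_mat_lincomb:
  assumes "length z = l" "square_rows l R"
  shows "vec_mat l z (mat_of_rows R) = lincomb l z R"
proof (rule nth_equalityI)
  show "length (vec_mat l z (mat_of_rows R)) = length (lincomb l z R)"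
    using assms by (simp add: vec_mat_def square_rows_def)
next
  fix j assume "j < length (vec_mat l z (mat_of_rows R))"
  then have j: "j < l" by (simp add: vec_mat_def)
  have "lincomb l z R ! j = odd (length (filter (\<lambda>(c, r). c \<and> r ! j) (zip z R)))"
    using nth_lincomb[of z R l j] assms j by (simp add: square_rows_def)
  also have "length (filter (\<lambda>(c, r). c \<and> r ! j) (zip z R)) = card {i. i < l \<and> z ! i \<and> R ! i ! j}"
    by (subst length_filter_conv_card)
       (use assms in \<open>auto simp: square_rows_def intro!: arg_cong[where f=card]\<close>)
  finally show "vec_mat l z (mat_of_rows R) ! j = lincomb l z R ! j"
    using j by (simp add: vec_mat_def mat_of_rows_def)
qed

lemma lin_kernel_lincomb:
  "square_rows l R \<Longrightarrow> length z = l \<Longrightarrow> lin_kernel l (mat_of_rows R) z = lincomb l z R"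
  by (simp add: lin_kernel_def vec_mat_lincomb)

lemma lincomb_id_rows: "length z = n \<Longrightarrow> lincomb n z (id_rows n) = z"
proof -
  assume z: "length z = n"
  have sq: "square_rows n (id_rows n)" by (simp add: square_rows_def id_rows_def)
  have "vec_mat n z (mat_of_rows (id_rows n)) = z"
  proof (rule nth_equalityI)
    fix j assume "j < length (vec_mat n z (mat_of_rows (id_rows n)))"
    then have j: "j < n" by (simp add: vec_mat_def)
    have "{i. i < n \<and> z ! i \<and> mat_of_rows (id_rows n) i j} = (if z ! j then {j} else {})"
      using j by (auto simp: mat_of_rows_def id_rows_def)
    then show "vec_mat n z (mat_of_rows (id_rows n)) ! j = z ! j"
      using j by (simp add: vec_mat_def)
  qed (simp add: vec_mat_def z)
  then show ?thesis using vec_mat_lincomb[OF z sq] by simp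
qed

section \<open>Invertibility from an explicit inverse\<close>

definition mutually_inverse :: "nat \<Rightarrow> bool list list \<Rightarrow> bool list list \<Rightarrow> bool" where
  "mutually_inverse l R S \<longleftrightarrow> square_rows l R \<and> square_rows l S \<and>
     map (\<lambda>r. lincomb l r S) R = id_rows l \<and> map (\<lambda>s. lincomb l s R) S = id_rows l"

lemma mutually_inverse_sym: "mutually_inverse l R S \<Longrightarrow> mutually_inverse l S R"
  by (auto simp: mutually_inverse_def)

lemma lincomb_cancel:
  assumes "mutually_inverse l R S" "length x = l"
  shows "lincomb l (lincomb l x R) S = x"
proof -
  have sq: "square_rows l R" "square_rows l S" using assms(1) by (auto simp: mutually_inverse_def)
  have "lincomb l (lincomb l x R) S = lincomb l x (map (\<lambda>r. lincomb l r S) R)"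
    using lincomb_lincomb[of x R S l] sq assms(2) by (simp add: square_rows_def)
  also have "\<dots> = x"
    using assms by (simp add: mutually_inverse_def lincomb_id_rows)
  finally show ?thesis .
qed

lemma mat_mult2_lincomb:
  assumes "square_rows l R" "square_rows l S" "i < l" "j < l"
  shows "mat_mult2 l (mat_of_rows R) (mat_of_rows S) i j = lincomb l (R ! i) S ! j"
proof -
  have "mat_mult2 l (mat_of_rows R) (mat_of_rows S) i j = vec_mat l (R ! i) (mat_of_rows S) ! j"
    using assms(4) by (simp add: mat_mult2_def vec_mat_def mat_of_rows_def)
  also have "\<dots> = lincomb l (R ! i) S ! j"
    using assms by (simp add: vec_mat_lincomb square_rows_def)
  finally show ?thesis .
qed

lemma invertible2_if_mutually_inverse:
  assumes "mutually_inverse l R S"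
  shows "invertible2 l (mat_of_rows R)"
  unfolding invertible2_def
proof (intro exI[of _ "mat_of_rows S"] allI impI conjI)
  have sq: "square_rows l R" "square_rows l S" using assms by (auto simp: mutually_inverse_def)
  fix i j assume ij: "i < l" "j < l"
  have "lincomb l (R ! i) S = id_rows l ! i" "lincomb l (S ! i) R = id_rows l ! i"
    using assms ij sq by (metis mutually_inverse_def nth_map square_rows_def)+
  then show "mat_mult2 l (mat_of_rows R) (mat_of_rows S) i j = (i = j)"
    "mat_mult2 l (mat_of_rows S) (mat_of_rows R) i j = (i = j)"
    using ij sq by (simp_all add: mat_mult2_lincomb id_rows_def)
qed

lemma kernel_if_mutually_inverse:
  assumes "mutually_inverse l R S"
  shows "kernel l (lin_kernel l (mat_of_rows R))"
  unfolding kernel_def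
proof (rule bij_betw_byWitness[where f'="lin_kernel l (mat_of_rows S)"])
  have sq: "square_rows l R" "square_rows l S" using assms by (auto simp: mutually_inverse_def)
  show "\<forall>x\<in>bvecs l. lin_kernel l (mat_of_rows S) (lin_kernel l (mat_of_rows R) x) = x"
    "\<forall>x\<in>bvecs l. lin_kernel l (mat_of_rows R) (lin_kernel l (mat_of_rows S) x) = x"
    using sq lincomb_cancel[OF assms] lincomb_cancel[OF mutually_inverse_sym[OF assms]]
    by (auto simp: bvecs_def lin_kernel_lincomb square_rows_def)
  show "lin_kernel l (mat_of_rows R) ` bvecs l \<subseteq> bvecs l"
    "lin_kernel l (mat_of_rows S) ` bvecs l \<subseteq> bvecs l"
    by (auto simp: bvecs_def lin_kernel_def vec_mat_def)
qed

section \<open>Partial distances of a linear kernel\<close>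

lemma hamming_weight: "length a = length b \<Longrightarrow> hamming a b = weight (vadd a b)"
  unfolding hamming_def weight_def
  by (subst length_filter_conv_card) (auto intro!: arg_cong[where f=card])

lemma hamming_le_length: "hamming a b \<le> length a"
proof -
  have "{k. k < length a \<and> a ! k \<noteq> b ! k} \<subseteq> {..<length a}" by auto
  then show ?thesis unfolding hamming_def by (metis card_lessThan card_mono finite_lessThan)
qed

lemma lin_kernel_distance:
  assumes R: "square_rows l R" and i: "i < l"
    and len: "length w = i" "length u = l - Suc i" "length v = l - Suc i"
  shows "hamming (lin_kernel l (mat_of_rows R) (w @ [False] @ u))
                 (lin_kernel l (mat_of_rows R) (w @ [True] @ v))
       = weight (vadd (R ! i) (lincomb l (vadd u v) (drop (Suc i) R)))"
proof -
  have lx: "length (w @ [False] @ u) = l" "length (w @ [True] @ v) = l" using len i by auto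
  have rows: "length R = l" "\<forall>r\<in>set R. length r = l" using R by (auto simp: square_rows_def)
  have "hamming (lin_kernel l (mat_of_rows R) (w @ [False] @ u))
                (lin_kernel l (mat_of_rows R) (w @ [True] @ v))
      = weight (vadd (lincomb l (w @ [False] @ u) R) (lincomb l (w @ [True] @ v) R))"
    using lx rows R by (simp add: lin_kernel_lincomb hamming_weight)
  also have "vadd (lincomb l (w @ [False] @ u) R) (lincomb l (w @ [True] @ v) R)
      = lincomb l (vadd (w @ [False] @ u) (w @ [True] @ v)) R"
    using lx rows by (intro lincomb_vadd[symmetric]) auto
  also have "vadd (w @ [False] @ u) (w @ [True] @ v) = replicate i False @ True # vadd u v"
    using len by (simp add: vadd_append)
  also have "lincomb l (replicate i False @ True # vadd u v) R
      = vadd (R ! i) (lincomb l (vadd u v) (drop (Suc i) R))"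
    using i rows by (intro lincomb_unit_prefix) auto
  finally show ?thesis .
qed

lemma partial_dist_lin_kernel_eqI:
  assumes R: "square_rows l R" and i: "i < l"
    and lower: "\<And>t. length t = l - Suc i \<Longrightarrow> d \<le> weight (vadd (R ! i) (lincomb l t (drop (Suc i) R)))"
    and witness: "length t0 = l - Suc i" "weight (vadd (R ! i) (lincomb l t0 (drop (Suc i) R))) = d"
  shows "partial_dist l (lin_kernel l (mat_of_rows R)) i = d"
proof -
  let ?g = "lin_kernel l (mat_of_rows R)"
  let ?S = "{hamming (?g (w @ [False] @ u)) (?g (w @ [True] @ v)) | w u v.
      length w = i \<and> length u = l - i - 1 \<and> length v = l - i - 1}"
  have "?S \<subseteq> {..l}"
    by (auto simp: lin_kernel_def) (metis hamming_le_length length_vec_mat)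
  then have fin: "finite ?S" by (rule finite_subset) simp
  have low: "d \<le> y" if "y \<in> ?S" for y
  proof -
    from that obtain w u v where y: "y = hamming (?g (w @ [False] @ u)) (?g (w @ [True] @ v))"
      and len: "length w = i" "length u = l - Suc i" "length v = l - Suc i" by auto
    show ?thesis using lin_kernel_distance[OF R i len] lower[of "vadd u v"] len y by simp
  qed
  have "hamming (?g (replicate i False @ [False] @ replicate (l - Suc i) False))
          (?g (replicate i False @ [True] @ t0)) = d"
    using lin_kernel_distance[OF R i, of "replicate i False" "replicate (l - Suc i) False" t0]
      witness by simp
  then have mem: "d \<in> ?S" using witness(1) by fastforce
  show ?thesis unfolding partial_dist_def by (rule Min_eqI[OF fin low mem])
qed

section \<open>Certified lower bounds on coset weights\<close>

fun min_coset_weight :: "bool list \<Rightarrow> bool list list \<Rightarrow> nat" where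
  "min_coset_weight v [] = weight v"
| "min_coset_weight v (r # rs) = min (min_coset_weight v rs) (min_coset_weight (vadd v r) rs)"

lemma min_coset_weight_le:
  assumes "length t = length rs" "\<forall>r\<in>set rs. length r = n" "length v = n"
  shows "min_coset_weight v rs \<le> weight (vadd v (lincomb n t rs))"
  using assms
proof (induction rs arbitrary: t v)
  case (Cons r rs)
  then obtain c t' where t: "t = c # t'" by (metis length_Suc_conv)
  show ?case
  proof (cases c)
    case True
    with Cons t have "min_coset_weight (vadd v r) rs \<le> weight (vadd (vadd v r) (lincomb n t' rs))"
      by simp
    with Cons.prems t True show ?thesis by (simp add: vadd_assoc min.coboundedI2)
  next
    case False
    with Cons t show ?thesis by (simp add: min.coboundedI1)
  qed
qed simp

fun no_small_sum :: "bool list list \<Rightarrow> bool list \<Rightarrow> nat \<Rightarrow> bool list \<Rightarrow> bool" where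
  "no_small_sum [] acc k target = (acc \<noteq> target)"
| "no_small_sum (h # hs) acc k target =
     (no_small_sum hs acc k target \<and> (k = 0 \<or> no_small_sum hs (vadd acc h) (k - 1) target))"

lemma no_small_sum_sound:
  assumes "no_small_sum hs acc k target" "length c = length hs" "weight c \<le> k"
    "length acc = m" "\<forall>h\<in>set hs. length h = m"
  shows "vadd acc (lincomb m c hs) \<noteq> target"
  using assms
proof (induction hs arbitrary: c acc k)
  case (Cons h hs)
  then obtain x c' where c: "c = x # c'" by (metis length_Suc_conv)
  show ?case
  proof (cases x)
    case True
    with Cons c have "vadd (vadd acc h) (lincomb m c' hs) \<noteq> target"
      by (intro Cons.IH[of "vadd acc h" "k - 1"]) auto
    with Cons.prems c True show ?thesis by (simp add: vadd_assoc)
  next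
    case False
    with Cons.IH[of acc k c'] Cons.prems c show ?thesis by simp
  qed
qed simp

text \<open>Parity-check bound: if the columns of H annihilate every row of rs, then
  r + t rs has the same syndrome as r; a vector of weight at most k with that
  syndrome would make it a sum of at most k rows of H.\<close>

lemma parity_check_lower_bound:
  assumes check: "no_small_sum H (replicate m False) k (lincomb m r H)"
    and annihilate: "\<forall>x\<in>set rs. lincomb m x H = replicate m False"
    and len: "length r = n" "length H = n" "\<forall>h\<in>set H. length h = m"
      "\<forall>x\<in>set rs. length x = n" "length t = length rs"
  shows "k < weight (vadd r (lincomb n t rs))"
proof (rule ccontr)
  define c where "c = vadd r (lincomb n t rs)"
  assume "\<not> k < weight (vadd r (lincomb n t rs))"
  then have small: "weight c \<le> k" by (simp add: c_def)
  have "lincomb m (lincomb n t rs) H = lincomb m t (map (\<lambda>x. lincomb m x H) rs)"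
    using lincomb_lincomb[of t rs H m] len by simp
  also have "\<dots> = replicate m False" using annihilate by (intro lincomb_zero_rows) auto
  finally have zero: "lincomb m (lincomb n t rs) H = replicate m False" .
  have "lincomb m c H = vadd (lincomb m r H) (lincomb m (lincomb n t rs) H)"
    unfolding c_def using len by (intro lincomb_vadd) auto
  also have "\<dots> = lincomb m r H" using zero len by simp
  finally have "vadd (replicate m False) (lincomb m c H) = lincomb m r H"
    using len by simp
  with no_small_sum_sound[OF check _ small] len show False by (simp add: c_def)
qed

text \<open>A lower-bound certificate is either exhaustive enumeration, or a parity-check
  matrix given by its columns (the checks, vectors of the same length as the rows).\<close>

datatype lower_bound_cert = Exhaustive | Parity_Checks "bool list list"

fun lower_bound_ok :: "nat \<Rightarrow> bool list \<Rightarrow> bool list list \<Rightarrow> nat \<Rightarrow> lower_bound_cert \<Rightarrow> bool" where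
  "lower_bound_ok n r rs d Exhaustive \<longleftrightarrow> d \<le> min_coset_weight r rs"
| "lower_bound_ok n r rs d (Parity_Checks checks) \<longleftrightarrow>
     (let H = transpose checks; m = length checks in
        0 < d \<and> length H = n \<and> (\<forall>h\<in>set H. length h = m) \<and>
        (\<forall>x\<in>set rs. lincomb m x H = replicate m False) \<and>
        no_small_sum H (replicate m False) (d - 1) (lincomb m r H))"

lemma lower_bound_ok_sound:
  assumes "lower_bound_ok n r rs d cert" "length r = n" "\<forall>x\<in>set rs. length x = n"
    "length t = length rs"
  shows "d \<le> weight (vadd r (lincomb n t rs))"
proof (cases cert)
  case Exhaustive
  with assms show ?thesis using min_coset_weight_le[of t rs n r] by simp
next
  case (Parity_Checks checks)
  with assms show ?thesis
    using parity_check_lower_bound[of "transpose checks" "length checks" "d - 1" r rs n t]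
    by (simp add: Let_def)
qed

definition certified :: "nat \<Rightarrow> bool list \<Rightarrow> bool list list \<Rightarrow> nat \<Rightarrow> bool list \<Rightarrow> lower_bound_cert \<Rightarrow> bool" where
  "certified n r rs d t cert \<longleftrightarrow>
     length t = length rs \<and> weight (vadd r (lincomb n t rs)) = d \<and> lower_bound_ok n r rs d cert"

lemma partial_dist_certified:
  assumes R: "square_rows l R" and i: "i < l"
    and cert: "certified l (R ! i) (drop (Suc i) R) d t c"
  shows "partial_dist l (lin_kernel l (mat_of_rows R)) i = d"
proof (rule partial_dist_lin_kernel_eqI[OF R i])
  have rows: "length (R ! i) = l" "\<forall>x\<in>set (drop (Suc i) R). length x = l"
    using R i by (auto simp: square_rows_def dest: in_set_dropD)
  show "d \<le> weight (vadd (R ! i) (lincomb l t' (drop (Suc i) R)))" if "length t' = l - Suc i" for t'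
    using lower_bound_ok_sound[of l "R ! i" "drop (Suc i) R" d c t'] cert rows that R
    by (simp add: certified_def square_rows_def)
  show "length t = l - Suc i" "weight (vadd (R ! i) (lincomb l t (drop (Suc i) R))) = d"
    using cert R by (simp_all add: certified_def square_rows_def)
qed

section \<open>The exponent of a kernel is at most E_l\<close>

lemma finite_bvecs: "finite (bvecs l)"
  using finite_lists_length_eq[of "UNIV :: bool set" l] by (simp add: bvecs_def)

lemma partial_dist_restrict:
  assumes "i < l"
  shows "partial_dist l (restrict g (bvecs l)) i = partial_dist l g i"
proof -
  have "w @ b # u \<in> bvecs l" if "length w = i" "length u = l - i - 1" for w u b
    using that assms by (simp add: bvecs_def)
  then show ?thesis unfolding partial_dist_def
    by (intro arg_cong[where f=Min] Collect_cong) (metis append_Cons append_Nil restrict_apply')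
qed

lemma kernel_exponent_le_max:
  assumes "kernel l g"
  shows "kernel_exponent l g \<le> max_exponent l"
proof -
  let ?K = "{kernel_exponent l g | g. kernel l g}"
  have "?K \<subseteq> kernel_exponent l ` (bvecs l \<rightarrow>\<^sub>E bvecs l)"
  proof
    fix x assume "x \<in> ?K"
    then obtain h where x: "x = kernel_exponent l h" and h: "kernel l h" by blast
    have "restrict h (bvecs l) \<in> bvecs l \<rightarrow>\<^sub>E bvecs l"
      using h bij_betw_imp_funcset[of h "bvecs l" "bvecs l"] unfolding kernel_def
      by (auto simp: restrict_PiE_iff)
    moreover have "kernel_exponent l (restrict h (bvecs l)) = x"
      unfolding x kernel_exponent_def by (simp add: partial_dist_restrict)
    ultimately show "x \<in> kernel_exponent l ` (bvecs l \<rightarrow>\<^sub>E bvecs l)" by force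
  qed
  moreover have "finite (kernel_exponent l ` (bvecs l \<rightarrow>\<^sub>E bvecs l))"
    by (intro finite_imageI finite_PiE finite_bvecs)
  ultimately have "finite ?K" by (rule finite_subset)
  moreover have "kernel_exponent l g \<in> ?K" using assms by blast
  ultimately show ?thesis unfolding max_exponent_def by (rule Max_ge)
qed

section \<open>The 25 x 25 kernel\<close>

definition bits :: "string \<Rightarrow> bool list" where
  "bits s = map (\<lambda>c. c = CHR ''1'') s"

definition A_rows :: "bool list list" where
  "A_rows = map bits
   [''1000000000000000000000000'',
    ''1000110011010100101001011'',
    ''1010001100010010011010100'',
    ''0010110101110100110111010'',
    ''1011001001100011011100100'',
    ''1010101011011110110101000'',
    ''1001101010000001101001100'',
    ''1111001000011111010111011'',
    ''1010011101110111100101011'',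
    ''0100100110111010011111111'',
    ''1010101001110001011001001'',
    ''1110011000100010110100110'',
    ''0010101011111100010000110'',
    ''1111001100110010001010010'',
    ''0011111010110011001010000'',
    ''0001111100110000110001110'',
    ''1101001110111010101111100'',
    ''0001011111111011011111000'',
    ''0101111001001000101110010'',
    ''1110011001110001100101000'',
    ''1011010111000001110010010'',
    ''1100001011101010101010010'',
    ''0111100110110010100110000'',
    ''1101001101111101110111000'',
    ''1011110010101111001110110'']"

definition A_inv_rows :: "bool list list" where
  "A_inv_rows = map bits
   [''1000000000000000000000000'',
    ''1101100111011110111111101'',
    ''1111010110111001000101000'',
    ''1001100010101011000010001'',
    ''1111001000110011101100111'',
    ''1100000011110100101001111'',
    ''1100011010010000010001110'',
    ''1110011111000101010000100'',
    ''1110111110100100111001100'',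
    ''1001010110001111000000110'',
    ''1001001011011000101101001'',
    ''1101111101101111110101110'',
    ''1011001111100101111111101'',
    ''1011011011000010110110100'',
    ''1011111100101100001110000'',
    ''1010111100100001000100000'',
    ''1001110001110010100101100'',
    ''1000011101001111101001001'',
    ''1110001100010010100010100'',
    ''1110100000111100010100100'',
    ''1100100001001011011010000'',
    ''1010100101010100101011101'',
    ''1011100010111001101110001'',
    ''1100110001011111010111101'',
    ''1111101100101010000100000'']"

text \<open>For row i, coefficients of a combination of the rows below it that, added to
  row i, has weight D^(i).\<close>

definition witnesses :: "bool list list" where
  "witnesses = map bits
   [''000000000000000000000000'',
    ''01100111011110111111101'',
    ''1001111100101111111101'',
    ''100010101011000010001'',
    ''11010010011000001000'',
    ''1101001111101001001'',
    ''101000110111110101'',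
    ''10000001010100011'',
    ''0111000110000101'',
    ''111001111100101'',
    ''11001001001101'',
    ''0011001011011'',
    ''110101000110'',
    ''00011110100'',
    ''0011110100'',
    ''111111111'',
    ''10100000'',
    ''0011000'',
    ''011100'',
    ''00010'',
    ''0000'',
    ''000'',
    ''00'',
    ''0'',
    '''']"

text \<open>Lower bound certificates: parity checks for the first 13 rows (check i+1 vectors
  for row i), exhaustive enumeration of the at most 2^11 combinations for the rest.\<close>

definition lower_bound_certs :: "lower_bound_cert list" where
  "lower_bound_certs = map (\<lambda>checks. Parity_Checks (map bits checks))
   [[''1111111111111111111111111''],
    [''1001000001101111110001100'',
     ''0110111110010000001110011''],
    [''1001000001101111110001100'',
     ''0100011000011111000011110'',
     ''0010100110001111001101101''],
    [''1000011110000001011111010'',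
     ''0100011000011111000011110'',
     ''0010100110001111001101101'',
     ''0001011111101110101110110''],
    [''1000011011100011010101101'',
     ''0100011000011111000011110'',
     ''0010100011101101000111010'',
     ''0001011010001100100100001'',
     ''0000000101100010001010111''],
    [''1000011011100011010101101'',
     ''0100011000011111000011110'',
     ''0010001010110101111010101'',
     ''0001011010001100100100001'',
     ''0000101001011000111101111'',
     ''0000000101100010001010111''],
    [''1000011001100110111010100'',
     ''0100011000011111000011110'',
     ''0010001000110000010101100'',
     ''0001011000001001001011000'',
     ''0000101001011000111101111'',
     ''0000000101100010001010111'',
     ''0000000010000101101111001''],
    [''1000001001110101010000001'',
     ''0100001000001100101001011'',
     ''0010001000110000010101100'',
     ''0001001000011010100001101'',
     ''0000101001011000111101111'',
     ''0000010000010011101010101'',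
     ''0000000101100010001010111'',
     ''0000000010000101101111001''],
    [''1000001001001011000010100'',
     ''0100001000001100101001011'',
     ''0010001000001110000111001'',
     ''0001001000011010100001101'',
     ''0000101001011000111101111'',
     ''0000010000010011101010101'',
     ''0000000101011100011000010'',
     ''0000000010000101101111001'',
     ''0000000000111110010010101''],
    [''1000000000001010111000111'',
     ''0100000001001101010011000'',
     ''0010000001001111111101010'',
     ''0001000001011011011011110'',
     ''0000100000011001000111100'',
     ''0000010000010011101010101'',
     ''0000001001000001111010011'',
     ''0000000101011100011000010'',
     ''0000000010000101101111001'',
     ''0000000000111110010010101''],
    [''1000000000001010111000110'',
     ''0100000001001101010011000'',
     ''0010000001001111111101010'',
     ''0001000001011011011011110'',
     ''0000100000011001000111100'',
     ''0000010000010011101010100'',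
     ''0000001001000001111010010'',
     ''0000000101011100011000010'',
     ''0000000010000101101111000'',
     ''0000000000111110010010100'',
     ''0000000000000000000000001''],
    [''1000000000001010111000110'',
     ''0100000000011010010101010'',
     ''0010000000011000111011000'',
     ''0001000000001100011101100'',
     ''0000100000011001000111100'',
     ''0000010000010011101010100'',
     ''0000001000010110111100000'',
     ''0000000100001011011110000'',
     ''0000000010000101101111000'',
     ''0000000001010111000110010'',
     ''0000000000111110010010100'',
     ''0000000000000000000000001''],
    [''1000000000001010111000110'',
     ''0100000000001111100100100'',
     ''0010000000001101001010110'',
     ''0001000000001100011101100'',
     ''0000100000001100110110010'',
     ''0000010000000110011011010'',
     ''0000001000000011001101110'',
     ''0000000100001011011110000'',
     ''0000000010000101101111000'',
     ''0000000001000010110111100'',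
     ''0000000000101011100011010'',
     ''0000000000010101110001110'',
     ''0000000000000000000000001'']] @ replicate 12 Exhaustive"

abbreviation A' :: "nat \<Rightarrow> nat \<Rightarrow> bool" where
  "A' \<equiv> mat_of_rows A_rows"

lemma A_square: "square_rows 25 A_rows"
  by code_simp

lemma A_inverse: "mutually_inverse 25 A_rows A_inv_rows"
  by code_simp

lemma A_certified:
  "\<forall>i<25. certified 25 (A_rows ! i) (drop (Suc i) A_rows) (D25 ! i) (witnesses ! i) (lower_bound_certs ! i)"
proof -
  have "list_all (\<lambda>i. certified 25 (A_rows ! i) (drop (Suc i) A_rows) (D25 ! i) (witnesses ! i)
      (lower_bound_certs ! i)) [0..<25]"
    by code_simp
  then show ?thesis by (simp add: list_all_iff)
qed

lemma A_partial_dists: "\<forall>i<25. partial_dist 25 (lin_kernel 25 A') i = D25 ! i"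
  using partial_dist_certified[OF A_square] A_certified by blast

theorem mainTheorem13:
  shows "(\<exists>A. invertible2 25 A \<and>
            (\<forall>i<25. partial_dist 25 (lin_kernel 25 A) i = D25 ! i))
         \<and> max_exponent 25 \<ge> (1 / 25) * (\<Sum>i<25. log 25 (real (D25 ! i)))"
proof
  show "\<exists>A. invertible2 25 A \<and> (\<forall>i<25. partial_dist 25 (lin_kernel 25 A) i = D25 ! i)"
    using invertible2_if_mutually_inverse[OF A_inverse] A_partial_dists by blast
  have "kernel_exponent 25 (lin_kernel 25 A') = (1 / 25) * (\<Sum>i<25. log 25 (real (D25 ! i)))"
    unfolding kernel_exponent_def using A_partial_dists by simp
  then show "max_exponent 25 \<ge> (1 / 25) * (\<Sum>i<25. log 25 (real (D25 ! i)))"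
    using kernel_exponent_le_max[OF kernel_if_mutually_inverse[OF A_inverse]] by simp
qed

end
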